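(* Let $F$ be any finite set of points with rational coordinates lying on the unit circle $x^2+y^2=1$ (for instance, $100$ such points), and consider the configuration consisting of the points of $F$ and the line $y=x$ (the circle itself is not part of the configuration). Then the two intersection points $\pm\left(\frac{\sqrt2}{2},\frac{\sqrt2}{2}\right)$ of the line $y=x$ with the unit circle are non-constructible by a straightedge from this configuration.
   Context: A configuration is a finite collection of points $a_i\in\mathbb R^2$, lines $\ell_i\subset\mathbb R^2$ and curves $\gamma_i\subset\mathbb R^2$. Given a configuration $\{a_i,\ell_i,\gamma_i\}$, call a set $\Sigma\subset\mathbb R^2$ admissible if: (1) $\Sigma$ is dense in $\mathbb R^2$; (2) every $a_i$ lies in $\Sigma$; (3) for any $b_1,b_2,b_3,b_4\in\Sigma$ with $b_1\neq b_2$, $b_3\ne b_4$, if the lines $b_1b_2$ and $b_3b_4$ are distinct and not parallel, then their intersection point lies in $\Sigma$; (4) for any distinct $b_1,b_2\in\Sigma$, every isolated intersection point of the line $b_1b_2$ with any of the lines $\ell_i$ or curves $\gamma_j$ lies in $\Sigma$. A point $a$ is non-constructible (by a straightedge) from the configuration if there exists an admissible set $\Sigma$ with $a\notin\Sigma$. *)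

theory Defs
  imports "HOL-Analysis.Analysis"
begin

type_synonym pt = "real \<times> real"

definition line_through :: "pt \<Rightarrow> pt \<Rightarrow> pt set" where
  "line_through b1 b2 = {p. \<exists>t::real. p = b1 + t *\<^sub>R (b2 - b1)}"

definition parallel_dir :: "pt \<Rightarrow> pt \<Rightarrow> bool" where
  "parallel_dir u v \<longleftrightarrow> fst u * snd v - snd u * fst v = 0"

definition isolated_pt :: "pt \<Rightarrow> pt set \<Rightarrow> bool" where
  "isolated_pt p S \<longleftrightarrow> p \<in> S \<and> (\<exists>e>0. \<forall>q\<in>S. dist q p < e \<longrightarrow> q = p)"

text \<open>Admissible sets for a configuration given by a set of points A, a set of lines L
  and a set of curves C (each line / curve being a subset of the plane).\<close>
definition admissible :: "pt set \<Rightarrow> pt set set \<Rightarrow> pt set set \<Rightarrow> pt set \<Rightarrow> bool" where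
  "admissible A L C \<Sigma> \<longleftrightarrow>
     closure \<Sigma> = UNIV \<and>
     A \<subseteq> \<Sigma> \<and>
     (\<forall>b1\<in>\<Sigma>. \<forall>b2\<in>\<Sigma>. \<forall>b3\<in>\<Sigma>. \<forall>b4\<in>\<Sigma>.
        b1 \<noteq> b2 \<and> b3 \<noteq> b4 \<and> line_through b1 b2 \<noteq> line_through b3 b4
        \<and> \<not> parallel_dir (b2 - b1) (b4 - b3) \<longrightarrow>
        line_through b1 b2 \<inter> line_through b3 b4 \<subseteq> \<Sigma>) \<and>
     (\<forall>b1\<in>\<Sigma>. \<forall>b2\<in>\<Sigma>. b1 \<noteq> b2 \<longrightarrow>
        (\<forall>X \<in> L \<union> C. \<forall>p. isolated_pt p (line_through b1 b2 \<inter> X) \<longrightarrow> p \<in> \<Sigma>))"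

definition non_constructible :: "pt set \<Rightarrow> pt set set \<Rightarrow> pt set set \<Rightarrow> pt \<Rightarrow> bool" where
  "non_constructible A L C a \<longleftrightarrow> (\<exists>\<Sigma>. admissible A L C \<Sigma> \<and> a \<notin> \<Sigma>)"

end

theory Submission
  imports Defs
begin

text \<open>The circle is not part of the configuration, so only the rationality of \<open>F\<close> matters:
  the set of all rational points is admissible. It is dense, two non-parallel lines through
  rational points meet in a rational point (Cramer's rule), and such a line meets the diagonal
  \<open>y = x\<close>, itself a line through rational points, either in a rational point or along a whole
  line, which has no isolated points. The points \<open>\<plusminus>(\<surd>2/2, \<surd>2/2)\<close> are not rational.\<close>

lemma sqrt_2_not_rat: "sqrt 2 \<notin> \<rat>"
proof
  assume "sqrt 2 \<in> \<rat>"
  then obtain m n :: nat where "n \<noteq> 0" and sq: "\<bar>sqrt 2\<bar> = m / n" and "coprime m n"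
    by (rule Rats_abs_nat_div_natE)
  have "real m = sqrt 2 * n" using \<open>n \<noteq> 0\<close> sq by (simp add: field_simps)
  then have "real (m\<^sup>2) = real (2 * n\<^sup>2)" by (simp add: power_mult_distrib)
  then have eq: "m\<^sup>2 = 2 * n\<^sup>2" by (simp only: of_nat_eq_iff)
  then have "even m" by (metis dvd_triv_left even_power)
  then obtain k where "m = 2 * k" ..
  with eq have "n\<^sup>2 = 2 * k\<^sup>2" by (simp add: power2_eq_square)
  then have "even n" by (metis dvd_triv_left even_power)
  with \<open>even m\<close> \<open>coprime m n\<close> show False
    using coprime_common_divisor[of m n 2] by simp
qed

definition rational_points :: "pt set" where
  "rational_points = \<rat> \<times> \<rat>"

lemma closure_rational_points: "closure rational_points = UNIV"
  unfolding rational_points_def by (metis closure_Times Rats_closure_real UNIV_Times_UNIV)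

lemma mem_line_through_iff_parallel:
  assumes "b1 \<noteq> b2"
  shows "p \<in> line_through b1 b2 \<longleftrightarrow> parallel_dir (p - b1) (b2 - b1)"
proof
  assume "p \<in> line_through b1 b2"
  then obtain t where "p = b1 + t *\<^sub>R (b2 - b1)" unfolding line_through_def by blast
  then have p: "p - b1 = t *\<^sub>R (b2 - b1)" by simp
  show "parallel_dir (p - b1) (b2 - b1)"
    unfolding parallel_dir_def p by (simp add: algebra_simps)
next
  assume par: "parallel_dir (p - b1) (b2 - b1)"
  obtain v1 v2 where v: "p - b1 = (v1, v2)" by fastforce
  obtain d1 d2 where d: "b2 - b1 = (d1, d2)" by fastforce
  have cross: "v1 * d2 = v2 * d1" using par v d unfolding parallel_dir_def by simp
  have "d1 \<noteq> 0 \<or> d2 \<noteq> 0" using assms d by (auto simp flip: zero_prod_def)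
  then obtain t where "v1 = t * d1 \<and> v2 = t * d2"
  proof
    assume "d1 \<noteq> 0"
    with cross show ?thesis by (intro that[of "v1 / d1"]) (simp add: field_simps)
  next
    assume "d2 \<noteq> 0"
    with cross show ?thesis by (intro that[of "v2 / d2"]) (simp add: field_simps)
  qed
  then have "p = b1 + t *\<^sub>R (b2 - b1)" using v d by (simp add: prod_eq_iff algebra_simps)
  then show "p \<in> line_through b1 b2" unfolding line_through_def by blast
qed

lemma line_through_inter_rational:
  assumes b: "b1 \<in> rational_points" "b2 \<in> rational_points"
      "b3 \<in> rational_points" "b4 \<in> rational_points"
    and np: "\<not> parallel_dir (b2 - b1) (b4 - b3)"
    and p: "p \<in> line_through b1 b2" "p \<in> line_through b3 b4"
  shows "p \<in> rational_points"
proof -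
  obtain x1 y1 x2 y2 x3 y3 x4 y4 where bs: "b1 = (x1,y1)" "b2 = (x2,y2)" "b3 = (x3,y3)" "b4 = (x4,y4)"
    by (metis prod.exhaust)
  have r: "x1 \<in> \<rat>" "y1 \<in> \<rat>" "x2 \<in> \<rat>" "y2 \<in> \<rat>" "x3 \<in> \<rat>" "y3 \<in> \<rat>" "x4 \<in> \<rat>" "y4 \<in> \<rat>"
    using b bs unfolding rational_points_def by auto
  obtain t where t: "p = b1 + t *\<^sub>R (b2 - b1)" using p(1) unfolding line_through_def by auto
  obtain s where s: "p = b3 + s *\<^sub>R (b4 - b3)" using p(2) unfolding line_through_def by auto
  define D where "D = (x2 - x1) * (y4 - y3) - (y2 - y1) * (x4 - x3)"
  have "D \<noteq> 0" using np bs unfolding parallel_dir_def D_def by simp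
  have ex: "t * (x2 - x1) = (x3 - x1) + s * (x4 - x3)"
    and ey: "t * (y2 - y1) = (y3 - y1) + s * (y4 - y3)"
    using t s bs by (simp_all add: prod_eq_iff algebra_simps)
  \<comment> \<open>Cramer's rule: eliminating \<open>s\<close> expresses \<open>t\<close> rationally in the coordinates.\<close>
  have "t * D = (x3 - x1) * (y4 - y3) - (y3 - y1) * (x4 - x3)"
  proof -
    have "t * D = (t * (x2 - x1)) * (y4 - y3) - (t * (y2 - y1)) * (x4 - x3)"
      unfolding D_def by (simp add: algebra_simps)
    also have "\<dots> = (x3 - x1) * (y4 - y3) - (y3 - y1) * (x4 - x3)"
      unfolding ex ey by (simp add: algebra_simps)
    finally show ?thesis .
  qed
  then have "t = ((x3 - x1) * (y4 - y3) - (y3 - y1) * (x4 - x3)) / D"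
    using \<open>D \<noteq> 0\<close> by (simp add: field_simps)
  then have "t \<in> \<rat>" using r unfolding D_def by simp
  then show ?thesis using t r bs unfolding rational_points_def by simp
qed

lemma parallel_dir_add_left:
  assumes "parallel_dir u w" and "parallel_dir v w"
  shows "parallel_dir (u + r *\<^sub>R v) w"
proof -
  have "fst (u + r *\<^sub>R v) * snd w - snd (u + r *\<^sub>R v) * fst w
      = (fst u * snd w - snd u * fst w) + r * (fst v * snd w - snd v * fst w)"
    by (simp add: algebra_simps)
  with assms show ?thesis unfolding parallel_dir_def by simp
qed

lemma not_isolated_pt_if_contains_line:
  assumes "d \<noteq> 0" and "\<And>r. p + r *\<^sub>R d \<in> S"
  shows "\<not> isolated_pt p S"
proof
  assume "isolated_pt p S"
  then obtain e where "e > 0" and iso: "\<And>q. q \<in> S \<Longrightarrow> dist q p < e \<Longrightarrow> q = p"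
    unfolding isolated_pt_def by blast
  define q where "q = p + (e / (2 * norm d)) *\<^sub>R d"
  have "dist q p = e / 2" using \<open>d \<noteq> 0\<close> \<open>e > 0\<close> by (simp add: q_def dist_norm)
  then have "q = p" using iso[of q] assms(2) \<open>e > 0\<close> unfolding q_def by simp
  then show False using \<open>d \<noteq> 0\<close> \<open>e > 0\<close> by (simp add: q_def)
qed

lemma isolated_pt_inter_rational_lines:
  assumes b: "b1 \<in> rational_points" "b2 \<in> rational_points" "b1 \<noteq> b2"
    and c: "c1 \<in> rational_points" "c2 \<in> rational_points" "c1 \<noteq> c2"
    and iso: "isolated_pt p (line_through b1 b2 \<inter> line_through c1 c2)"
  shows "p \<in> rational_points"
proof (cases "parallel_dir (b2 - b1) (c2 - c1)")
  case False
  with iso show ?thesis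
    using line_through_inter_rational[OF b(1,2) c(1,2)] unfolding isolated_pt_def by blast
next
  case True
  \<comment> \<open>Parallel lines sharing the point \<open>p\<close> coincide, so \<open>p\<close> is not isolated.\<close>
  have pb: "p \<in> line_through b1 b2" and pc: "p \<in> line_through c1 c2"
    using iso unfolding isolated_pt_def by auto
  have "p + r *\<^sub>R (b2 - b1) \<in> line_through b1 b2 \<inter> line_through c1 c2" for r
  proof -
    have "parallel_dir (b2 - b1) (b2 - b1)" unfolding parallel_dir_def by simp
    with pb have "parallel_dir ((p - b1) + r *\<^sub>R (b2 - b1)) (b2 - b1)"
      by (simp add: mem_line_through_iff_parallel[OF b(3)] parallel_dir_add_left)
    then have "p + r *\<^sub>R (b2 - b1) \<in> line_through b1 b2"
      by (simp add: mem_line_through_iff_parallel[OF b(3)] algebra_simps)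
    moreover from pc True have "parallel_dir ((p - c1) + r *\<^sub>R (b2 - b1)) (c2 - c1)"
      by (simp add: mem_line_through_iff_parallel[OF c(3)] parallel_dir_add_left)
    then have "p + r *\<^sub>R (b2 - b1) \<in> line_through c1 c2"
      by (simp add: mem_line_through_iff_parallel[OF c(3)] algebra_simps)
    ultimately show ?thesis by blast
  qed
  then show ?thesis using not_isolated_pt_if_contains_line[of "b2 - b1"] b(3) iso by auto
qed

lemma admissible_rational_points:
  assumes "A \<subseteq> rational_points"
    and "\<And>X. X \<in> L \<Longrightarrow> \<exists>c1\<in>rational_points. \<exists>c2\<in>rational_points.
           c1 \<noteq> c2 \<and> X = line_through c1 c2"
  shows "admissible A L {} rational_points"
  unfolding admissible_def
proof (intro conjI ballI allI impI subsetI)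
  fix b1 b2 b3 b4 p
  assume "b1 \<in> rational_points" "b2 \<in> rational_points" "b3 \<in> rational_points"
    "b4 \<in> rational_points"
    and "b1 \<noteq> b2 \<and> b3 \<noteq> b4 \<and> line_through b1 b2 \<noteq> line_through b3 b4
      \<and> \<not> parallel_dir (b2 - b1) (b4 - b3)"
    and "p \<in> line_through b1 b2 \<inter> line_through b3 b4"
  then show "p \<in> rational_points" using line_through_inter_rational by blast
next
  fix b1 b2 X p
  assume b: "b1 \<in> rational_points" "b2 \<in> rational_points" "b1 \<noteq> b2"
    and "X \<in> L \<union> {}" and iso: "isolated_pt p (line_through b1 b2 \<inter> X)"
  then obtain c1 c2 where "c1 \<in> rational_points" "c2 \<in> rational_points" "c1 \<noteq> c2"
    and "X = line_through c1 c2"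
    using assms(2) by blast
  with b iso show "p \<in> rational_points" using isolated_pt_inter_rational_lines by blast
qed (use assms(1) closure_rational_points in auto)

lemma diagonal_eq_line_through: "{p :: pt. snd p = fst p} = line_through (0, 0) (1, 1)"
  unfolding line_through_def by (auto simp: prod_eq_iff)

theorem mainTheorem8:
  fixes F :: "(real \<times> real) set"
  assumes "finite F"
    and "\<forall>p\<in>F. fst p \<in> \<rat> \<and> snd p \<in> \<rat> \<and> (fst p)\<^sup>2 + (snd p)\<^sup>2 = 1"
  shows "non_constructible F {{p. snd p = fst p}} {} (sqrt 2 / 2, sqrt 2 / 2)
       \<and> non_constructible F {{p. snd p = fst p}} {} (- (sqrt 2 / 2), - (sqrt 2 / 2))"
proof -
  have "F \<subseteq> rational_points" using assms(2) unfolding rational_points_def by auto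
  moreover have "\<exists>c1\<in>rational_points. \<exists>c2\<in>rational_points.
      c1 \<noteq> c2 \<and> {p. snd p = fst p} = line_through c1 c2"
    unfolding diagonal_eq_line_through
    by (rule bexI[of _ "(0, 0)"], rule bexI[of _ "(1, 1)"]) (auto simp: rational_points_def)
  ultimately have adm: "admissible F {{p. snd p = fst p}} {} rational_points"
    by (intro admissible_rational_points) auto
  have "sqrt 2 / 2 \<notin> \<rat>"
    using sqrt_2_not_rat Rats_mult[of 2 "sqrt 2 / 2"] by auto
  then have "(sqrt 2 / 2, sqrt 2 / 2) \<notin> rational_points"
    and "(- (sqrt 2 / 2), - (sqrt 2 / 2)) \<notin> rational_points"
    unfolding rational_points_def by auto
  with adm show ?thesis unfolding non_constructible_def by blast
qed

end
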